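(* For real $z\ge 10$ let $$c_1(z)=\sum_{\substack{n_1,n_2,n_3,n_4\le z\\ \sqrt{n_1}+\sqrt{n_2}+\sqrt{n_3}=\sqrt{n_4}}}\frac{d(n_1)d(n_2)d(n_3)d(n_4)}{(n_1n_2n_3)^{3/4}n_4^{1/4}},$$ the sum being over positive integers. Then $c_1(z)\ll 1$ uniformly for $z\ge 10$.
   Context: $d(n)$ denotes the number of positive divisors of $n$. $f\ll g$ means $|f|\le Cg$ for some absolute positive constant $C$. *)

theory Defs
  imports "HOL-Analysis.Analysis"
begin

definition ndiv :: "nat \<Rightarrow> nat" where
  "ndiv n = card {k. k dvd n \<and> k > 0}"

definition c1 :: "real \<Rightarrow> real" where
  "c1 z = (\<Sum>(n1, n2, n3, n4) \<in>
      {(n1, n2, n3, n4). n1 \<in> {1..nat \<lfloor>z\<rfloor>} \<and> n2 \<in> {1..nat \<lfloor>z\<rfloor>} \<and>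
          n3 \<in> {1..nat \<lfloor>z\<rfloor>} \<and> n4 \<in> {1..nat \<lfloor>z\<rfloor>} \<and>
          sqrt (real n1) + sqrt (real n2) + sqrt (real n3) = sqrt (real n4)}.
      real (ndiv n1 * ndiv n2 * ndiv n3 * ndiv n4) /
        ((real (n1 * n2 * n3)) powr (3/4) * (real n4) powr (1/4)))"

end

theory Submission
  imports Defs "HOL-Computational_Algebra.Squarefree" "HOL-Computational_Algebra.Nth_Powers"
begin

text \<open>
  Two general facts drive the proof.  First, the divisor bound d(n) \<le> C_k n^(1/k),
  proved by induction over the prime factorisation.  Second, the equation forces n_1 n_2 and
  n_1 n_3 to be perfect squares (squaring twice shows \<surd>(n_1 n_2) is rational), so
  n_1, n_2, n_3 share a squarefree part q: n_i = q m_i^2.  With k = 6, each summand is at most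
  C^4 q^(-7/4) (m_1 m_2 m_3)^(-7/6).  Since the code (q, m_1, m_2, m_3) determines the solution,
  c_1(z) is bounded by C^4 \<Sum>q^(-7/4) (\<Sum>m^(-7/6))^3 < \<infinity>.
\<close>

lemma ndiv_1: "ndiv 1 = 1"
  unfolding ndiv_def by (simp add: Collect_conv_if)

text \<open>Submultiplicativity d(ab) \<le> d(a) d(b): every divisor of ab is a product of a divisor
  of a and a divisor of b.\<close>
lemma ndiv_mult_le:
  fixes a b :: nat
  assumes "a > 0" "b > 0"
  shows "ndiv (a * b) \<le> ndiv a * ndiv b"
proof -
  let ?A = "{k. k dvd a \<and> k > 0}" and ?B = "{k. k dvd b \<and> k > 0}"
  have "{k. k dvd a * b \<and> k > 0} \<subseteq> (\<lambda>(x, y). x * y) ` (?A \<times> ?B)"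
  proof
    fix k assume "k \<in> {k. k dvd a * b \<and> k > 0}"
    then have k: "k dvd a * b" "k > 0" by auto
    from division_decomp[OF k(1)] obtain x y where "k = x * y" "x dvd a" "y dvd b" by blast
    with k(2) show "k \<in> (\<lambda>(x, y). x * y) ` (?A \<times> ?B)"
      by (auto intro!: image_eqI[of _ _ "(x, y)"])
  qed
  then have "ndiv (a * b) \<le> card ((\<lambda>(x, y). x * y) ` (?A \<times> ?B))"
    unfolding ndiv_def using assms by (intro card_mono) auto
  also have "\<dots> \<le> card (?A \<times> ?B)"
    using assms by (intro card_image_le) auto
  finally show ?thesis by (simp add: ndiv_def card_cartesian_product)
qed

lemma ndiv_prime_power:
  assumes "prime (p::nat)" shows "ndiv (p ^ e) \<le> e + 1"
proof -
  have "{k. k dvd p ^ e \<and> k > 0} \<subseteq> (\<lambda>i. p ^ i) ` {0..e}"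
    using divides_primepow_nat[OF assms] by auto
  then have "ndiv (p ^ e) \<le> card ((\<lambda>i. p ^ i) ` {0..e})"
    unfolding ndiv_def by (intro card_mono) auto
  also have "\<dots> \<le> card {0..e}" by (rule card_image_le) auto
  finally show ?thesis by simp
qed

text \<open>For a base x \<ge> 2^k one has e + 1 \<le> 2^e \<le> x^(e/k): large primes contribute
  no constant factor to the divisor bound.\<close>
lemma succ_le_powr_large_base:
  fixes e k :: nat and x :: real
  assumes "k \<ge> 1" "x \<ge> 2 ^ k"
  shows "real (e + 1) \<le> x powr (real e / real k)"
proof -
  have x0: "x > 0" using assms(2) zero_less_power[of "2::real" k] by linarith
  have "real (e + 1) \<le> 2 ^ e"
    by (metis Suc_eq_plus1 Suc_leI less_exp of_nat_le_iff of_nat_numeral of_nat_power)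
  also have "(2::real) ^ e = ((2 ^ k) powr (1 / real k)) ^ e"
    using assms(1) by (simp add: powr_realpow[symmetric] powr_powr)
  also have "\<dots> \<le> (x powr (1 / real k)) ^ e"
    using assms by (intro power_mono powr_mono2) auto
  also have "\<dots> = x powr (real e / real k)"
    using x0 by (simp add: powr_realpow[symmetric] powr_powr)
  finally show ?thesis .
qed

text \<open>For any base x \<ge> 2 one still has e + 1 \<le> k x^(e/k), since
  e + 1 \<le> k (\<lfloor>e/k\<rfloor> + 1) \<le> k 2^\<lfloor>e/k\<rfloor>.\<close>
lemma succ_le_powr_small_base:
  fixes e k :: nat and x :: real
  assumes "k \<ge> 1" "x \<ge> 2"
  shows "real (e + 1) \<le> real k * x powr (real e / real k)"
proof -
  have "e mod k < k" using assms(1) by simp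
  moreover have "k * (e div k) + e mod k = e" by (rule mult_div_mod_eq)
  ultimately have "e + 1 \<le> k * (e div k) + k" by linarith
  then have "e + 1 \<le> k * (e div k + 1)" by (simp add: distrib_left)
  also have "\<dots> \<le> k * 2 ^ (e div k)"
    using less_exp[of "e div k"] by (intro mult_le_mono2) (simp add: Suc_le_eq)
  finally have "real (e + 1) \<le> real (k * 2 ^ (e div k))" by (simp only: of_nat_le_iff)
  then have "real (e + 1) \<le> real k * 2 ^ (e div k)" by simp
  also have "\<dots> \<le> real k * x powr (real e / real k)"
  proof (rule mult_left_mono)
    have "(2::real) ^ (e div k) \<le> 2 powr (real e / real k)"
      by (simp add: powr_realpow[symmetric] of_nat_div_le_of_nat)
    also have "\<dots> \<le> x powr (real e / real k)" using assms by (intro powr_mono2) auto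
    finally show "(2::real) ^ (e div k) \<le> x powr (real e / real k)" .
  qed simp
  finally show ?thesis .
qed

lemma ndiv_prime_power_le:
  fixes p e k :: nat
  assumes p: "prime p" and k: "k \<ge> 1"
  shows "real (ndiv (p ^ e)) \<le> real k ^ (if p < 2 ^ k then 1 else 0) * real p powr (real e / real k)"
proof -
  have "real (ndiv (p ^ e)) \<le> real (e + 1)"
    using ndiv_prime_power[OF p] by (simp only: of_nat_le_iff)
  also have "\<dots> \<le> real k ^ (if p < 2 ^ k then 1 else 0) * real p powr (real e / real k)"
  proof (cases "p < 2 ^ k")
    case True
    then show ?thesis using succ_le_powr_small_base[OF k, of p e] prime_ge_2_nat[OF p] by simp
  next
    case False
    then have "real p \<ge> 2 ^ k" by (metis not_less of_nat_le_iff of_nat_numeral of_nat_power)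
    then show ?thesis using False succ_le_powr_large_base[OF k] by simp
  qed
  finally show ?thesis .
qed

lemma split_off_prime_power:
  fixes n :: nat
  assumes "n > 1"
  obtains p e m where "prime p" "e \<ge> 1" "n = p ^ e * m" "\<not> p dvd m" "0 < m" "m < n"
proof -
  obtain p where p: "prime p" "p dvd n" using prime_factor_nat[of n] assms by auto
  have "n \<noteq> 0" "\<not> is_unit p" using assms p by auto
  then obtain m where m: "n = p ^ multiplicity p n * m" "\<not> p dvd m"
    using multiplicity_decompose' by blast
  define e where "e = multiplicity p n"
  have "e \<ge> 1"
  proof (rule ccontr)
    assume "\<not> e \<ge> 1"
    then have "multiplicity p n = 0" unfolding e_def by simp
    then have "n = m" using m(1) by simp
    then show False using m(2) p(2) by simp
  qed
  have "0 < m" using m assms by (cases "m = 0") auto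
  have "1 < p ^ e" using \<open>e \<ge> 1\<close> prime_gt_1_nat[OF p(1)] by (intro one_less_power) auto
  then have "1 * m < p ^ e * m" using \<open>0 < m\<close> by (intro mult_strict_right_mono) auto
  then have "m < n" using m unfolding e_def by simp
  show ?thesis using that p(1) \<open>e \<ge> 1\<close> m \<open>0 < m\<close> \<open>m < n\<close> unfolding e_def by blast
qed

text \<open>The primes below B dividing n; each of them costs a factor k in the divisor bound.\<close>
definition small_prime_divisors :: "nat \<Rightarrow> nat \<Rightarrow> nat set" where
  "small_prime_divisors B n = {p. prime p \<and> p < B \<and> p dvd n}"

lemma small_prime_divisors_subset: "small_prime_divisors B n \<subseteq> {..<B}"
  unfolding small_prime_divisors_def by auto

lemma card_small_prime_divisors_split:
  assumes "prime p" "n = p ^ e * m" "e \<ge> 1" "\<not> p dvd m"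
  shows "card (small_prime_divisors B m) + (if p < B then 1 else 0) \<le> card (small_prime_divisors B n)"
proof -
  let ?P = "if p < B then {p} else {}"
  have sub: "small_prime_divisors B m \<union> ?P \<subseteq> small_prime_divisors B n"
    using assms unfolding small_prime_divisors_def by (auto simp: dvd_power)
  have fin: "finite (small_prime_divisors B n)"
    using small_prime_divisors_subset finite_subset by blast
  have "card (small_prime_divisors B m) + card ?P = card (small_prime_divisors B m \<union> ?P)"
    using assms(4) fin sub finite_subset
    by (intro card_Un_disjoint[symmetric]) (auto simp: small_prime_divisors_def)
  also have "\<dots> \<le> card (small_prime_divisors B n)" by (rule card_mono[OF fin sub])
  finally show ?thesis by (simp split: if_splits)
qed

lemma ndiv_le_small_primes:
  fixes k n :: nat
  assumes k: "k \<ge> 1" and "n > 0"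
  shows "real (ndiv n) \<le> real k ^ card (small_prime_divisors (2 ^ k) n) * real n powr (1 / real k)"
  using \<open>n > 0\<close>
proof (induction n rule: less_induct)
  case (less n)
  let ?Q = "\<lambda>n. card (small_prime_divisors (2 ^ k) n)"
  show ?case
  proof (cases "n = 1")
    case True
    have "small_prime_divisors (2 ^ k) 1 = {}"
      unfolding small_prime_divisors_def by (auto dest: prime_gt_1_nat)
    then show ?thesis using True ndiv_1 by simp
  next
    case False
    then have "n > 1" using less.prems by simp
    then obtain p e m where
      pem: "prime p" "e \<ge> 1" "n = p ^ e * m" "\<not> p dvd m" "0 < m" "m < n"
      by (rule split_off_prime_power)
    define b where "b = (if p < 2 ^ k then 1 else 0 :: nat)"
    have IH: "real (ndiv m) \<le> real k ^ ?Q m * real m powr (1 / real k)"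
      using less.IH[OF pem(6,5)] .
    have "real (ndiv n) \<le> real (ndiv (p ^ e)) * real (ndiv m)"
      using ndiv_mult_le[of "p ^ e" m] pem prime_gt_0_nat by (simp flip: of_nat_mult)
    also have "\<dots> \<le> (real k ^ b * real p powr (real e / real k)) * (real k ^ ?Q m * real m powr (1 / real k))"
      using ndiv_prime_power_le[OF pem(1) k, of e] IH unfolding b_def by (intro mult_mono) auto
    also have "\<dots> = real k ^ (?Q m + b) * real n powr (1 / real k)"
      using pem prime_gt_0_nat
      by (simp add: power_add powr_mult powr_realpow[symmetric] powr_powr mult_ac)
    also have "\<dots> \<le> real k ^ ?Q n * real n powr (1 / real k)"
      using card_small_prime_divisors_split[OF pem(1,3,2,4)] k unfolding b_def
      by (intro mult_right_mono power_increasing) auto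
    finally show ?thesis .
  qed
qed

lemma ndiv_le:
  fixes k n :: nat
  assumes "k \<ge> 1" "n > 0"
  shows "real (ndiv n) \<le> real k ^ 2 ^ k * real n powr (1 / real k)"
proof -
  have "card (small_prime_divisors (2 ^ k) n) \<le> card {..<(2::nat) ^ k}"
    by (intro card_mono small_prime_divisors_subset) auto
  then have "real k ^ card (small_prime_divisors (2 ^ k) n) \<le> real k ^ 2 ^ k"
    using assms(1) by (intro power_increasing) auto
  then show ?thesis
    using ndiv_le_small_primes[OF assms] by (meson mult_right_mono order_trans powr_ge_zero)
qed

text \<open>The algebra behind the rationality argument: if x + y + u = w and A = w^2 + u^2 - x^2 - y^2,
  then A = 2xy + 2uw and x y is a rational expression in A, x^2, y^2, u^2, w^2.\<close>
lemma three_roots_identity: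
  fixes x y u w :: real
  assumes "x + y + u = w"
  defines "A \<equiv> w\<^sup>2 + u\<^sup>2 - x\<^sup>2 - y\<^sup>2"
  shows "A = 2 * x * y + 2 * u * w"
    and "4 * A * (x * y) = A\<^sup>2 + 4 * x\<^sup>2 * y\<^sup>2 - 4 * u\<^sup>2 * w\<^sup>2"
  unfolding A_def assms(1)[symmetric] by (simp_all add: power2_eq_square algebra_simps)

text \<open>If \<surd>a + \<surd>b + \<surd>c = \<surd>d with a, b > 0, then \<surd>(ab) is rational, hence ab is a
  perfect square.\<close>
lemma sqrt_sum_imp_square_product:
  fixes a b c d :: nat
  assumes "a > 0" "b > 0" and eq: "sqrt (real a) + sqrt (real b) + sqrt (real c) = sqrt (real d)"
  shows "is_nth_power 2 (a * b)"
proof -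
  define A :: int where "A = int d + int c - int a - int b"
  define X :: int where "X = A\<^sup>2 + 4 * int a * int b - 4 * int c * int d"
  have hA: "real_of_int A = 2 * sqrt a * sqrt b + 2 * sqrt c * sqrt d"
    and hX: "4 * real_of_int A * (sqrt a * sqrt b) = real_of_int X"
    using three_roots_identity[OF eq] by (simp_all add: A_def X_def)
  have "0 < 2 * sqrt a * sqrt b" "0 \<le> 2 * sqrt c * sqrt d" using assms by simp_all
  then have "real_of_int A > 0" using hA by linarith
  then have "A > 0" by simp
  from hX have "(4 * real_of_int A * (sqrt a * sqrt b))\<^sup>2 = (real_of_int X)\<^sup>2" by simp
  then have "16 * (real_of_int A)\<^sup>2 * (real a * real b) = (real_of_int X)\<^sup>2"
    by (simp add: power_mult_distrib)
  then have "real_of_int (int (a * b) * (4 * A)\<^sup>2) = real_of_int (X\<^sup>2)"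
    by (simp add: power_mult_distrib mult_ac)
  then have "int (a * b) * (4 * A)\<^sup>2 = X\<^sup>2" by (simp only: of_int_eq_iff)
  then have "int (a * b * (nat (4 * A))\<^sup>2) = int ((nat \<bar>X\<bar>)\<^sup>2)"
    using \<open>A > 0\<close> by simp
  then have "a * b * (nat (4 * A))\<^sup>2 = (nat \<bar>X\<bar>)\<^sup>2" by (simp only: of_nat_eq_iff)
  then have "is_nth_power 2 (a * b * (nat (4 * A))\<^sup>2)" by auto
  then show ?thesis using \<open>A > 0\<close> by (subst (asm) is_nth_power_mult_cancel_right) auto
qed

lemma squarefree_part_eq_if_square_product:
  fixes a b :: nat
  assumes "a > 0" "b > 0" "is_nth_power 2 (a * b)"
  shows "squarefree_part a = squarefree_part b"
proof -
  have "normalize (squarefree_part a) = normalize (squarefree_part b)"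
  proof (rule multiplicity_eq_imp_eq)
    fix p :: nat assume p: "prime p"
    have "even (multiplicity p (a * b))"
      using assms(3) p is_nth_power_conv_multiplicity_nat[of 2 "a * b"] by auto
    also have "multiplicity p (a * b) = multiplicity p a + multiplicity p b"
      using p assms by (intro prime_elem_multiplicity_mult_distrib) auto
    finally have "multiplicity p a mod 2 = multiplicity p b mod 2" by presburger
    then show "multiplicity p (squarefree_part a) = multiplicity p (squarefree_part b)"
      using p by (simp add: prime_multiplicity_squarefree_part)
  qed auto
  then show ?thesis by simp
qed

lemma square_part_bounds: "n > 0 \<Longrightarrow> 1 \<le> square_part n \<and> square_part n \<le> (n::nat)"
proof -
  assume "n > 0"
  have "square_part n \<le> square_part n ^ 2" by (simp add: power2_eq_square)
  also have "\<dots> \<le> n" using \<open>n > 0\<close> by (intro dvd_imp_le) simp_all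
  finally show ?thesis using \<open>n > 0\<close> square_part_0_iff[of n] by linarith
qed

lemma squarefree_part_bounds: "n > 0 \<Longrightarrow> 1 \<le> squarefree_part n \<and> squarefree_part n \<le> (n::nat)"
proof -
  assume "n > 0"
  have "squarefree_part n dvd n"
    by (subst (2) squarefree_decompose) simp
  moreover have "0 < squarefree_part n" by (rule gr0I) simp
  ultimately show ?thesis using \<open>n > 0\<close> by (simp add: Suc_le_eq dvd_imp_le)
qed

lemma sum_product_box:
  fixes f g1 g2 g3 :: "nat \<Rightarrow> real"
  shows "(\<Sum>(q, m1, m2, m3)\<in>A \<times> B \<times> C \<times> D. f q * (g1 m1 * (g2 m2 * g3 m3)))
           = sum f A * (sum g1 B * (sum g2 C * sum g3 D))"
  by (simp only: sum_product) (simp only: sum.cartesian_product[symmetric] sum_distrib_left split_conv)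

text \<open>The constant in the case k = 6 of the divisor bound, used for all four variables.\<close>
definition divisor_const :: real where
  "divisor_const = 6 ^ 64"

lemma divisor_const_nonneg [simp]: "divisor_const \<ge> 0"
  unfolding divisor_const_def by simp

lemma ndiv_le_divisor_const: "n > 0 \<Longrightarrow> real (ndiv n) \<le> divisor_const * real n powr (1 / 6)"
  using ndiv_le[of 6 n] by (simp add: divisor_const_def)

lemma ndiv_div_powr_quarter:
  assumes "n > 0" shows "real (ndiv n) / real n powr (1 / 4) \<le> divisor_const"
proof -
  have "real (ndiv n) \<le> divisor_const * real n powr (1 / 6)" by (rule ndiv_le_divisor_const[OF assms])
  also have "\<dots> \<le> divisor_const * real n powr (1 / 4)"
    using assms by (intro mult_left_mono powr_mono) auto
  finally show ?thesis using assms by (simp add: divide_le_eq)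
qed

lemma ndiv_div_powr_three_quarters:
  assumes "q > 0" "m > 0"
  shows "real (ndiv (q * m\<^sup>2)) / real (q * m\<^sup>2) powr (3 / 4)
           \<le> divisor_const * (real q powr (-7 / 12) * real m powr (-7 / 6))"
proof -
  let ?n = "real (q * m\<^sup>2)"
  have "real (ndiv (q * m\<^sup>2)) / ?n powr (3 / 4) \<le> divisor_const * ?n powr (1 / 6) / ?n powr (3 / 4)"
    using assms ndiv_le_divisor_const[of "q * m\<^sup>2"] by (intro divide_right_mono) auto
  also have "\<dots> = divisor_const * ?n powr (-7 / 12)"
  proof -
    have "(1 / 6 :: real) - 3 / 4 = -7 / 12" by simp
    then have "?n powr (1 / 6) / ?n powr (3 / 4) = ?n powr (-7 / 12)"
      by (metis powr_diff)
    then show ?thesis by (simp only: times_divide_eq_right[symmetric])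
  qed
  also have "?n powr (-7 / 12) = real q powr (-7 / 12) * (real m ^ 2) powr (-7 / 12)"
    by (simp add: powr_mult)
  also have "(real m ^ 2) powr (-7 / 12) = real m powr (-7 / 6)"
  proof -
    have "real m ^ 2 = real m powr 2" using assms by (simp add: powr_realpow)
    then have "(real m ^ 2) powr (-7 / 12) = (real m powr 2) powr (-7 / 12)" by simp
    also have "\<dots> = real m powr (2 * (-7 / 12))" by (rule powr_powr)
    finally show ?thesis by simp
  qed
  finally show ?thesis .
qed

definition solutions :: "nat \<Rightarrow> (nat \<times> nat \<times> nat \<times> nat) set" where
  "solutions N = {(n1, n2, n3, n4). n1 \<in> {1..N} \<and> n2 \<in> {1..N} \<and> n3 \<in> {1..N} \<and> n4 \<in> {1..N} \<and>
      sqrt (real n1) + sqrt (real n2) + sqrt (real n3) = sqrt (real n4)}"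

definition c1_term :: "nat \<times> nat \<times> nat \<times> nat \<Rightarrow> real" where
  "c1_term = (\<lambda>(n1, n2, n3, n4). real (ndiv n1 * ndiv n2 * ndiv n3 * ndiv n4) /
      ((real (n1 * n2 * n3)) powr (3/4) * (real n4) powr (1/4)))"

lemma c1_eq_sum: "c1 z = sum c1_term (solutions (nat \<lfloor>z\<rfloor>))"
  unfolding c1_def c1_term_def solutions_def by (rule refl)

lemma c1_term_nonneg: "c1_term x \<ge> 0"
  unfolding c1_term_def by (auto simp: case_prod_beta)

text \<open>A solution is encoded by the common squarefree part q of n_1, n_2, n_3 and their square
  parts m_1, m_2, m_3; the weight q^(-7/4) (m_1 m_2 m_3)^(-7/6) is summable over all codes.\<close>
definition encode :: "nat \<times> nat \<times> nat \<times> nat \<Rightarrow> nat \<times> nat \<times> nat \<times> nat" where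
  "encode = (\<lambda>(n1, n2, n3, n4). (squarefree_part n1, square_part n1, square_part n2, square_part n3))"

definition weight :: "nat \<times> nat \<times> nat \<times> nat \<Rightarrow> real" where
  "weight = (\<lambda>(q, m1, m2, m3).
      real q powr (-7 / 4) * (real m1 powr (-7 / 6) * (real m2 powr (-7 / 6) * real m3 powr (-7 / 6))))"

lemma weight_nonneg: "weight p \<ge> 0"
  unfolding weight_def by (auto simp: case_prod_beta)

lemma solution_squarefree_parts:
  fixes n1 n2 n3 n4 :: nat
  assumes "n1 > 0" "n2 > 0" "n3 > 0"
    and eq: "sqrt (real n1) + sqrt (real n2) + sqrt (real n3) = sqrt (real n4)"
  shows "squarefree_part n2 = squarefree_part n1" "squarefree_part n3 = squarefree_part n1"
proof -
  have "is_nth_power 2 (n1 * n2)" using assms by (intro sqrt_sum_imp_square_product[OF _ _ eq])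
  then show "squarefree_part n2 = squarefree_part n1"
    using assms by (intro squarefree_part_eq_if_square_product[symmetric])
  have eq': "sqrt (real n1) + sqrt (real n3) + sqrt (real n2) = sqrt (real n4)" using eq by linarith
  have "is_nth_power 2 (n1 * n3)" using assms by (intro sqrt_sum_imp_square_product[OF _ _ eq'])
  then show "squarefree_part n3 = squarefree_part n1"
    using assms by (intro squarefree_part_eq_if_square_product[symmetric])
qed

lemma c1_term_le_weight:
  assumes "x \<in> solutions N"
  shows "c1_term x \<le> divisor_const ^ 4 * weight (encode x)"
proof -
  obtain n1 n2 n3 n4 where x: "x = (n1, n2, n3, n4)" by (cases x)
  have pos: "n1 > 0" "n2 > 0" "n3 > 0" "n4 > 0"
    and eq: "sqrt (real n1) + sqrt (real n2) + sqrt (real n3) = sqrt (real n4)"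
    using assms unfolding x solutions_def by auto
  define q where "q = squarefree_part n1"
  define m1 m2 m3 where "m1 = square_part n1" "m2 = square_part n2" "m3 = square_part n3"
  have n: "n1 = q * m1\<^sup>2" "n2 = q * m2\<^sup>2" "n3 = q * m3\<^sup>2"
    using squarefree_decompose[of n1] squarefree_decompose[of n2] squarefree_decompose[of n3]
      solution_squarefree_parts[OF pos(1-3) eq] unfolding q_def m1_m2_m3_def by simp_all
  have "q > 0" "m1 > 0" "m2 > 0" "m3 > 0" using pos unfolding n by simp_all
  let ?D = divisor_const and ?r = "\<lambda>n. real (ndiv n) / real n powr (3 / 4)"
  have "c1_term x = ?r n1 * ?r n2 * ?r n3 * (real (ndiv n4) / real n4 powr (1 / 4))"
    unfolding x c1_term_def by (simp add: powr_mult)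
  also have "\<dots> \<le> (?D * (real q powr (-7/12) * real m1 powr (-7/6))) *
      (?D * (real q powr (-7/12) * real m2 powr (-7/6))) *
      (?D * (real q powr (-7/12) * real m3 powr (-7/6))) * ?D"
    unfolding n using \<open>q > 0\<close> \<open>m1 > 0\<close> \<open>m2 > 0\<close> \<open>m3 > 0\<close> pos(4)
    by (intro mult_mono ndiv_div_powr_three_quarters ndiv_div_powr_quarter) auto
  also have "\<dots> = ?D ^ 4 * ((real q powr (-7/12) * real q powr (-7/12) * real q powr (-7/12)) *
      (real m1 powr (-7/6) * (real m2 powr (-7/6) * real m3 powr (-7/6))))"
    by (simp add: power4_eq_xxxx mult_ac)
  also have "real q powr (-7/12) * real q powr (-7/12) * real q powr (-7/12) = real q powr (-7/4)"
    by (simp flip: powr_add)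
  finally show ?thesis unfolding x encode_def weight_def q_def m1_m2_m3_def by simp
qed

text \<open>The code determines the solution: n_1, n_2, n_3 by the uniqueness of the squarefree
  decomposition, and then n_4 by the equation.\<close>
lemma encode_inj: "inj_on encode (solutions N)"
proof (rule inj_onI)
  fix x y assume "x \<in> solutions N" "y \<in> solutions N" and same: "encode x = encode y"
  obtain n1 n2 n3 n4 where x: "x = (n1, n2, n3, n4)" by (cases x)
  obtain k1 k2 k3 k4 where y: "y = (k1, k2, k3, k4)" by (cases y)
  have pn: "n1 > 0" "n2 > 0" "n3 > 0"
    and eqn: "sqrt (real n1) + sqrt (real n2) + sqrt (real n3) = sqrt (real n4)"
    using \<open>x \<in> solutions N\<close> unfolding x solutions_def by auto
  have pk: "k1 > 0" "k2 > 0" "k3 > 0"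
    and eqk: "sqrt (real k1) + sqrt (real k2) + sqrt (real k3) = sqrt (real k4)"
    using \<open>y \<in> solutions N\<close> unfolding y solutions_def by auto
  have sq: "square_part n1 = square_part k1" "square_part n2 = square_part k2"
      "square_part n3 = square_part k3" and sf1: "squarefree_part n1 = squarefree_part k1"
    using same unfolding x y encode_def by simp_all
  note sfn = solution_squarefree_parts[OF pn eqn] and sfk = solution_squarefree_parts[OF pk eqk]
  have "n1 = k1" by (rule squarefree_decomposition_unique[OF sq(1) sf1])
  moreover have "n2 = k2" using sfn sfk sf1 by (intro squarefree_decomposition_unique[OF sq(2)]) simp
  moreover have "n3 = k3" using sfn sfk sf1 by (intro squarefree_decomposition_unique[OF sq(3)]) simp
  ultimately have "sqrt (real n4) = sqrt (real k4)" using eqn eqk by simp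
  then show "x = y" unfolding x y using \<open>n1 = k1\<close> \<open>n2 = k2\<close> \<open>n3 = k3\<close> by simp
qed

lemma encode_solutions_subset: "encode ` solutions N \<subseteq> {1..N} \<times> {1..N} \<times> {1..N} \<times> {1..N}"
proof
  fix y assume "y \<in> encode ` solutions N"
  then obtain n1 n2 n3 n4 where x: "(n1, n2, n3, n4) \<in> solutions N" and y: "y = encode (n1, n2, n3, n4)"
    by auto
  have "n1 \<in> {1..N}" "n2 \<in> {1..N}" "n3 \<in> {1..N}" using x unfolding solutions_def by auto
  then show "y \<in> {1..N} \<times> {1..N} \<times> {1..N} \<times> {1..N}"
    using square_part_bounds[of n1] square_part_bounds[of n2] square_part_bounds[of n3]
      squarefree_part_bounds[of n1]
    unfolding y encode_def by auto
qed

lemma c1_bound: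
  shows "0 \<le> c1 z"
    and "c1 z \<le> divisor_const ^ 4 * (\<Sum>q. real q powr (-7 / 4)) * (\<Sum>m. real m powr (-7 / 6)) ^ 3"
proof -
  define N where "N = nat \<lfloor>z\<rfloor>"
  define f g :: "nat \<Rightarrow> real" where "f q = real q powr (-7 / 4)" and "g m = real m powr (-7 / 6)" for q m
  have f: "0 \<le> sum f {1..N}" "sum f {1..N} \<le> suminf f"
    and g: "0 \<le> sum g {1..N}" "sum g {1..N} \<le> suminf g"
    unfolding f_def g_def by (auto intro!: sum_nonneg sum_le_suminf simp: summable_real_powr_iff)
  have "c1 z = sum c1_term (solutions N)" unfolding N_def by (rule c1_eq_sum)
  then show "0 \<le> c1 z" by (simp add: sum_nonneg c1_term_nonneg)
  have "sum c1_term (solutions N) \<le> (\<Sum>x\<in>solutions N. divisor_const ^ 4 * weight (encode x))"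
    by (rule sum_mono) (rule c1_term_le_weight)
  also have "\<dots> = divisor_const ^ 4 * sum weight (encode ` solutions N)"
    by (simp add: sum_distrib_left sum.reindex[OF encode_inj])
  also have "\<dots> \<le> divisor_const ^ 4 * sum weight ({1..N} \<times> {1..N} \<times> {1..N} \<times> {1..N})"
    by (intro mult_left_mono sum_mono2 encode_solutions_subset weight_nonneg) auto
  also have "\<dots> = divisor_const ^ 4 * (sum f {1..N} * sum g {1..N} ^ 3)"
    unfolding weight_def f_def g_def by (subst sum_product_box) (simp add: power3_eq_cube)
  also have "\<dots> \<le> divisor_const ^ 4 * (suminf f * suminf g ^ 3)"
    using f g by (intro mult_left_mono mult_mono power_mono) auto
  finally show "c1 z \<le> divisor_const ^ 4 * (\<Sum>q. real q powr (-7 / 4)) * (\<Sum>m. real m powr (-7 / 6)) ^ 3"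
    using \<open>c1 z = sum c1_term (solutions N)\<close> unfolding f_def g_def by (simp add: mult.assoc)
qed

theorem lemma4p2:
  shows "\<exists>C>0. \<forall>z::real. z \<ge> 10 \<longrightarrow> \<bar>c1 z\<bar> \<le> C"
proof -
  obtain K where K: "\<And>z. 0 \<le> c1 z" "\<And>z. c1 z \<le> K"
    using c1_bound by blast
  have "\<bar>c1 z\<bar> \<le> max 1 K" for z
    using K[of z] by simp
  then show ?thesis by (intro exI[of _ "max 1 K"]) auto
qed

end
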